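(* Let $R$ be a discrete $\Gamma$-ring and let $w\in R[2]$ be a formal sum law in $R$. Then there is a unique multiplicative map (morphism of $\Gamma$-rings) $\phi: H\mathbb{N}\to R$ such that $\phi(1_{2^n})=w^n\in R[2^n]$ for all $n\ge 0$. Concretely, for $(n_1,\dots,n_k)\in \mathbb{N}[k]$ one has $\phi(n_1,\dots,n_k)=f(w^n)$ for any $n$ and any pointed map $f:[2^n]\to[k]$ with $f(1_{2^n})=(n_1,\dots,n_k)$.
   Context: Let $[n]=\{0,1,\dots,n\}$, pointed at $0$. $\Gamma^{op}$ is the category with objects $[n]$, $n\ge0$, and all pointed maps. A $\Gamma$-space is a functor $F$ from $\Gamma^{op}$ to pointed simplicial sets with $F[0]$ a point; it is extended to all finite pointed sets by choosing isomorphisms with the $[n]$. For a pointed map $f:K\to L$ we write $f$ also for $F(f)$. The symmetric group $\Sigma_n$ acts on $[n]$ by permuting $\{1,\dots,n\}$ and hence acts on $F[n]$. We identify $[n]\wedge[m]$ with $[nm]$ using the inverse lexicographic order: $i\wedge j\mapsto (j-1)n+i$ for $1\le i\le n,\ 1\le j\le m$. A $\Gamma$-ring is a $\Gamma$-space $R$ with a unit $\eta:\mathbf S\to R$ ($\mathbf S$ the inclusion functor of $\Gamma^{op}$ into pointed sets) and an associative unital multiplication, equivalently a family of maps $R(K)\wedge R(L)\to R(K\wedge L)$, $p\wedge q\mapsto pq$, natural in $K$ and $L$, associative, with unit $1:=\eta(1)\in R[1]$. $R$ is discrete if each $R(K)$ is a set (a constant simplicial set). For $w\in R[2]$, $w^k\in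 R[2^k]$ denotes the $k$-fold product (with $[2]^{\wedge k}=[2^k]$ via the identification above), $w^0=1$. A multiplicative map $\phi:A\to B$ of $\Gamma$-rings is a natural transformation with $\phi\circ\eta_A=\eta_B$ and $\phi(pq)=\phi(p)\phi(q)$. The pointed map $p^n_i:[n]\to[n-1]$ ($1\le i\le n$) is given by $p^n_i(j)=j$ for $j<i$, $p^n_i(i)=0$, $p^n_i(j)=j-1$ for $j>i$. $H\mathbb{N}$ is the $\Gamma$-ring with $H\mathbb{N}(K)=$ the reduced free commutative monoid on $K$ (so $H\mathbb{N}[k]=\mathbb{N}^k$, $\mathbb N$ including $0$), pointed maps acting by summing coefficients along fibres, unit sending $k\in K$ to the generator $k$, and multiplication $(\sum_k a_k k)(\sum_l b_l l)=\sum_{k\wedge l}a_kb_l(k\wedge l)$. $1_n=(1,\dots,1)\in H\mathbb{N}[n]$. A formal sum law in a $\Gamma$-ring $R$ is an element $w\in R[2]$ with (1) $p^2_1(w)=1$ and $p^2_2(w)=1$, and (2) for every $k\ge1$, $w^k\in R[2^k]$ is fixed by the action of $\Sigma_{2^k}$. *)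

theory Defs
  imports "HOL-Combinatorics.Permutations"
begin

text \<open>The finite pointed set [n] = {0,...,n} is represented
by the natural number n; a pointed map [n] -> [m] is a function f :: nat => nat with
f 0 = 0 and f i <= m for 1 <= i <= n (values outside {0..n} are irrelevant).
A discrete Gamma-ring is given by its value sets car n = R[n], the action of pointed
maps, the multiplication R[n] x R[m] -> R[nm] and the unit 1 in R[1].\<close>

record 'a gring =
  car :: "nat \<Rightarrow> 'a set"
  act :: "nat \<Rightarrow> nat \<Rightarrow> (nat \<Rightarrow> nat) \<Rightarrow> 'a \<Rightarrow> 'a"
  mul :: "nat \<Rightarrow> nat \<Rightarrow> 'a \<Rightarrow> 'a \<Rightarrow> 'a"
  one :: 'a

definition pmap :: "nat \<Rightarrow> nat \<Rightarrow> (nat \<Rightarrow> nat) \<Rightarrow> bool" where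
  "pmap n m f \<longleftrightarrow> f 0 = 0 \<and> (\<forall>i\<in>{1..n}. f i \<le> m)"

text \<open>The smash product f /\ g : [n]/\[m] -> [n']/\[m'] of pointed maps, using the
identification of [n]/\[m] with [nm] via i/\j |-> (j-1)n+i (inverse lexicographic order).\<close>
definition smash :: "nat \<Rightarrow> nat \<Rightarrow> (nat \<Rightarrow> nat) \<Rightarrow> (nat \<Rightarrow> nat) \<Rightarrow> nat \<Rightarrow> nat" where
  "smash n n' f g k =
     (if k = 0 then 0
      else (let i = (k - 1) mod n + 1; j = (k - 1) div n + 1
            in if f i = 0 \<or> g j = 0 then 0 else (g j - 1) * n' + f i))"

definition discrete_gamma_ring :: "'a gring \<Rightarrow> bool" where
  "discrete_gamma_ring R \<longleftrightarrow>
     (\<exists>x. car R 0 = {x}) \<and>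
     (\<forall>n m f x. pmap n m f \<and> x \<in> car R n \<longrightarrow> act R n m f x \<in> car R m) \<and>
     (\<forall>n m f g x. (\<forall>i\<le>n. f i = g i) \<and> x \<in> car R n \<longrightarrow> act R n m f x = act R n m g x) \<and>
     (\<forall>n x. x \<in> car R n \<longrightarrow> act R n n id x = x) \<and>
     (\<forall>n m l f g x. pmap n m f \<and> pmap m l g \<and> x \<in> car R n \<longrightarrow>
         act R m l g (act R n m f x) = act R n l (g \<circ> f) x) \<and>
     (\<forall>n m p q. p \<in> car R n \<and> q \<in> car R m \<longrightarrow> mul R n m p q \<in> car R (n * m)) \<and>
     (\<forall>n m n' m' f g p q. pmap n n' f \<and> pmap m m' g \<and> p \<in> car R n \<and> q \<in> car R m \<longrightarrow>
         act R (n * m) (n' * m') (smash n n' f g) (mul R n m p q)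
           = mul R n' m' (act R n n' f p) (act R m m' g q)) \<and>
     (\<forall>n m l p q r. p \<in> car R n \<and> q \<in> car R m \<and> r \<in> car R l \<longrightarrow>
         mul R (n * m) l (mul R n m p q) r = mul R n (m * l) p (mul R m l q r)) \<and>
     one R \<in> car R 1 \<and>
     (\<forall>n p. p \<in> car R n \<longrightarrow> mul R 1 n (one R) p = p \<and> mul R n 1 p (one R) = p)"

definition eta :: "'a gring \<Rightarrow> nat \<Rightarrow> nat \<Rightarrow> 'a" where
  "eta R n k = act R 1 n (\<lambda>i. if i = 1 then k else 0) (one R)"

primrec wpow :: "'a gring \<Rightarrow> 'a \<Rightarrow> nat \<Rightarrow> 'a" where
  "wpow R w 0 = one R"
| "wpow R w (Suc k) = mul R (2 ^ k) 2 (wpow R w k) w"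

definition proj :: "nat \<Rightarrow> nat \<Rightarrow> nat" where
  "proj i j = (if j < i then j else if j = i then 0 else j - 1)"

definition formal_sum_law :: "'a gring \<Rightarrow> 'a \<Rightarrow> bool" where
  "formal_sum_law R w \<longleftrightarrow>
     w \<in> car R 2 \<and>
     act R 2 1 (proj 1) w = one R \<and> act R 2 1 (proj 2) w = one R \<and>
     (\<forall>k\<ge>1. \<forall>\<sigma>. \<sigma> permutes {1..2 ^ k} \<longrightarrow> act R (2 ^ k) (2 ^ k) \<sigma> (wpow R w k) = wpow R w k)"

definition HN :: "nat list gring" where
  "HN = \<lparr> car = (\<lambda>n. {xs. length xs = n}),
          act = (\<lambda>n m f xs. map (\<lambda>j. \<Sum>i\<in>{i\<in>{1..n}. f i = j}. xs ! (i - 1)) [1..<m + 1]),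
          mul = (\<lambda>n m xs ys. concat (map (\<lambda>b. map (\<lambda>a. a * b) xs) ys)),
          one = [1] \<rparr>"

text \<open>Multiplicative maps of (discrete) Gamma-rings.  The components are required to be
undefined outside the carriers, so that a morphism is determined by its components on A[n].\<close>
definition mult_map :: "'a gring \<Rightarrow> 'b gring \<Rightarrow> (nat \<Rightarrow> 'a \<Rightarrow> 'b) \<Rightarrow> bool" where
  "mult_map A B \<phi> \<longleftrightarrow>
     (\<forall>n x. x \<in> car A n \<longrightarrow> \<phi> n x \<in> car B n) \<and>
     (\<forall>n x. x \<notin> car A n \<longrightarrow> \<phi> n x = undefined) \<and>
     (\<forall>n m f x. pmap n m f \<and> x \<in> car A n \<longrightarrow> \<phi> m (act A n m f x) = act B n m f (\<phi> n x)) \<and>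
     (\<forall>n k. k \<le> n \<longrightarrow> \<phi> n (eta A n k) = eta B n k) \<and>
     (\<forall>n m p q. p \<in> car A n \<and> q \<in> car A m \<longrightarrow>
         \<phi> (n * m) (mul A n m p q) = mul B n m (\<phi> n p) (\<phi> m q))"

end

theory Submission imports Defs begin

(* Every vector xs in HN[k] = N^k is the image of the vector of ones 1_{2^n} under
   some pointed map f : [2^n] -> [k] whose fibre over j has xs_j elements.  Hence a
   multiplicative phi with phi(1_{2^n}) = w^n must satisfy phi(xs) = f(w^n); this gives
   uniqueness and the explicit formula.  For existence we define phi(xs) by this formula
   for a chosen representative (n, f) and show that the value does not depend on it:
   (a) two representatives on the same level 2^n have fibres of equal size, so they
       differ by a permutation of {1..2^n}, which fixes w^n by the sum law axiom;
   (b) a representative on level 2^n lifts to level 2^(n+1) by precomposing with the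
       map collapsing the second half of [2^(n+1)] = [2^n] /\ [2], which sends 1_{2^(n+1)}
       to 1_{2^n} and w^(n+1) = w^n w to w^n because p_2(w) = 1.
   Naturality of phi is then immediate, and multiplicativity follows because smash
   products of representatives represent products in HN and w^a w^b = w^(a+b). *)

(* Index lists [1..<m+1] are kept folded; unfolding them with upt_Suc only gets in the way. *)
declare upt_Suc[simp del]


section \<open>Pointed maps and smash products\<close>

lemma pmap_comp:
  assumes f: "pmap n m f" and g: "pmap m l g"
  shows "pmap n l (g \<circ> f)"
  unfolding pmap_def
proof (intro conjI ballI)
  show "(g \<circ> f) 0 = 0" using f g by (simp add: pmap_def)
  fix i assume "i \<in> {1..n}"
  then have "f i = 0 \<or> f i \<in> {1..m}" using f by (auto simp: pmap_def)
  then show "(g \<circ> f) i \<le> l" using g by (auto simp: pmap_def)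
qed

lemma pmap_permutation:
  assumes "\<sigma> permutes {1..N}"
  shows "pmap N N \<sigma>"
  unfolding pmap_def
proof (intro conjI ballI)
  show "\<sigma> 0 = 0" using permutes_not_in[OF assms] by simp
  fix i assume "i \<in> {1..N}"
  then have "\<sigma> i \<in> {1..N}" using permutes_in_image[OF assms] by blast
  then show "\<sigma> i \<le> N" by simp
qed

lemma smash_index_decomp:
  fixes N M s :: nat
  assumes s: "s \<in> {1..N * M}"
  obtains a b where "a \<in> {1..N}" "b \<in> {1..M}" "s = (b - 1) * N + a"
proof
  have N0: "0 < N" using s by (cases N) auto
  show "s = ((s - 1) div N + 1 - 1) * N + ((s - 1) mod N + 1)" using s by auto
  show "(s - 1) mod N + 1 \<in> {1..N}" using mod_less_divisor[OF N0, of "s - 1"] by auto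
  have "(s - 1) div N < M" using s N0 by (auto simp: div_less_iff_less_mult mult.commute)
  then show "(s - 1) div N + 1 \<in> {1..M}" by auto
qed

lemma smash_at:
  assumes a: "a \<in> {1..N}" and b: "1 \<le> b"
  shows "smash N k f g ((b - 1) * N + a) = (if f a = 0 \<or> g b = 0 then 0 else (g b - 1) * k + f a)"
proof -
  have e: "(b - 1) * N + a - 1 = (a - 1) + (b - 1) * N" using a by auto
  have "a - 1 < N" using a by auto
  then have "((b - 1) * N + a - 1) mod N = a - 1" "((b - 1) * N + a - 1) div N = b - 1"
    unfolding e by simp_all
  then show ?thesis unfolding smash_def Let_def using a b by simp
qed

lemma pmap_smash:
  assumes f: "pmap N k f" and g: "pmap M l g"
  shows "pmap (N * M) (k * l) (smash N k f g)"
  unfolding pmap_def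
proof (intro conjI ballI)
  show "smash N k f g 0 = 0" by (simp add: smash_def)
  fix s assume "s \<in> {1..N * M}"
  then obtain a b where ab: "a \<in> {1..N}" "b \<in> {1..M}" and s: "s = (b - 1) * N + a"
    by (rule smash_index_decomp)
  have fk: "f a \<le> k" and gl: "g b \<le> l" using f g ab unfolding pmap_def by auto
  have "(g b - 1) * k + f a \<le> k * l" if "g b \<noteq> 0"
  proof -
    have "(g b - 1) * k + f a \<le> (g b - 1) * k + k" using fk by simp
    also have "\<dots> = g b * k" using that by (cases "g b") auto
    also have "\<dots> \<le> k * l" using gl by (simp add: mult.commute)
    finally show ?thesis .
  qed
  then show "smash N k f g s \<le> k * l"
    unfolding s using smash_at[OF ab(1), of b k f g] ab by auto
qed


lemma divmod_unique:
  fixes a b c d k :: nat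
  assumes "a * k + b = c * k + d" "b < k" "d < k"
  shows "a = c \<and> b = d"
proof -
  have "(b + a * k) div k = a" "(b + a * k) mod k = b" using assms(2) by simp_all
  moreover have "(d + c * k) div k = c" "(d + c * k) mod k = d" using assms(3) by simp_all
  ultimately show ?thesis using assms(1) by (metis add.commute)
qed

lemma smash_index_inj: "inj_on (\<lambda>(a, b). (b - 1) * N + a) ({1..N} \<times> {1::nat..})"
proof (rule inj_onI)
  fix x y assume x: "x \<in> {1..N} \<times> {1::nat..}" and y: "y \<in> {1..N} \<times> {1::nat..}"
    and xy_eq: "(\<lambda>(a, b). (b - 1) * N + a) x = (\<lambda>(a, b). (b - 1) * N + a) y"
  obtain a b a' b' where xy: "x = (a, b)" "y = (a', b')" by fastforce
  have "(b - 1) * N + (a - 1) = (b' - 1) * N + (a' - 1)" "a - 1 < N" "a' - 1 < N"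
    using x y xy_eq unfolding xy by auto
  then have "b - 1 = b' - 1 \<and> a - 1 = a' - 1" by (rule divmod_unique)
  then show "x = y" using x y unfolding xy by auto
qed

lemma smash_fibre:
  assumes f: "pmap N k f" and i: "i < k"
  shows "{s\<in>{1..N*M}. smash N k f g s = j * k + i + 1}
       = (\<lambda>(a, b). (b - 1) * N + a) ` ({a\<in>{1..N}. f a = i + 1} \<times> {b\<in>{1..M}. g b = j + 1})"
proof (intro equalityI subsetI)
  fix s assume s: "s \<in> {s\<in>{1..N*M}. smash N k f g s = j * k + i + 1}"
  then have "s \<in> {1..N * M}" by simp
  then obtain a b where ab: "a \<in> {1..N}" "b \<in> {1..M}" and se: "s = (b - 1) * N + a"
    by (rule smash_index_decomp)
  have nz: "f a \<noteq> 0" "g b \<noteq> 0" and v: "(g b - 1) * k + f a = j * k + i + 1"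
    using s smash_at[OF ab(1), of b k f g] ab(2) se by (auto split: if_splits)
  have "f a \<le> k" using f ab unfolding pmap_def by auto
  moreover have "(g b - 1) * k + (f a - 1) = j * k + i" using v nz by auto
  ultimately have "g b - 1 = j \<and> f a - 1 = i" using nz i by (intro divmod_unique) auto
  then show "s \<in> (\<lambda>(a, b). (b - 1) * N + a) ` ({a\<in>{1..N}. f a = i + 1} \<times> {b\<in>{1..M}. g b = j + 1})"
    using ab nz se by force
next
  fix s assume "s \<in> (\<lambda>(a, b). (b - 1) * N + a) ` ({a\<in>{1..N}. f a = i + 1} \<times> {b\<in>{1..M}. g b = j + 1})"
  then obtain a b where a: "a \<in> {1..N}" "f a = i + 1" and b: "b \<in> {1..M}" "g b = j + 1"
    and s: "s = (b - 1) * N + a" by auto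
  have "(b - 1) * N + a \<le> (b - 1) * N + N" using a by auto
  also have "\<dots> = b * N" using b by (cases b) auto
  also have "\<dots> \<le> N * M" using b by auto
  finally show "s \<in> {s\<in>{1..N*M}. smash N k f g s = j * k + i + 1}"
    using a b s smash_at[of a N b k f g] by auto
qed

lemma smash_fibre_card:
  assumes f: "pmap N k f" and i: "i < k"
  shows "card {s\<in>{1..N*M}. smash N k f g s = j * k + i + 1}
       = card {a\<in>{1..N}. f a = i + 1} * card {b\<in>{1..M}. g b = j + 1}"
proof -
  have "inj_on (\<lambda>(a, b). (b - 1) * N + a) ({a\<in>{1..N}. f a = i + 1} \<times> {b\<in>{1..M}. g b = j + 1})"
    by (rule inj_on_subset[OF smash_index_inj]) auto
  then show ?thesis
    unfolding smash_fibre[OF f i] by (simp add: card_image card_cartesian_product)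
qed


lemma dgr_act_car: "discrete_gamma_ring R \<Longrightarrow> pmap n m f \<Longrightarrow> x \<in> car R n \<Longrightarrow> act R n m f x \<in> car R m"
  by (simp add: discrete_gamma_ring_def)

lemma dgr_act_cong:
  "discrete_gamma_ring R \<Longrightarrow> (\<And>i. i \<le> n \<Longrightarrow> f i = g i) \<Longrightarrow> x \<in> car R n \<Longrightarrow> act R n m f x = act R n m g x"
  by (simp add: discrete_gamma_ring_def)

lemma dgr_act_id: "discrete_gamma_ring R \<Longrightarrow> x \<in> car R n \<Longrightarrow> act R n n id x = x"
  by (simp add: discrete_gamma_ring_def)

lemma dgr_act_comp: "discrete_gamma_ring R \<Longrightarrow> pmap n m f \<Longrightarrow> pmap m l g \<Longrightarrow> x \<in> car R n \<Longrightarrow>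
    act R m l g (act R n m f x) = act R n l (g \<circ> f) x"
  by (simp add: discrete_gamma_ring_def)

lemma dgr_mul_car: "discrete_gamma_ring R \<Longrightarrow> p \<in> car R n \<Longrightarrow> q \<in> car R m \<Longrightarrow> mul R n m p q \<in> car R (n * m)"
  by (simp add: discrete_gamma_ring_def)

lemma dgr_smash: "discrete_gamma_ring R \<Longrightarrow> pmap n n' f \<Longrightarrow> pmap m m' g \<Longrightarrow> p \<in> car R n \<Longrightarrow> q \<in> car R m \<Longrightarrow>
    act R (n * m) (n' * m') (smash n n' f g) (mul R n m p q) = mul R n' m' (act R n n' f p) (act R m m' g q)"
  by (simp add: discrete_gamma_ring_def)

lemma dgr_assoc: "discrete_gamma_ring R \<Longrightarrow> p \<in> car R n \<Longrightarrow> q \<in> car R m \<Longrightarrow> r \<in> car R l \<Longrightarrow>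
    mul R (n * m) l (mul R n m p q) r = mul R n (m * l) p (mul R m l q r)"
  by (simp add: discrete_gamma_ring_def)

lemma dgr_one: "discrete_gamma_ring R \<Longrightarrow> one R \<in> car R 1"
  by (simp add: discrete_gamma_ring_def)

lemma dgr_unit: "discrete_gamma_ring R \<Longrightarrow> p \<in> car R n \<Longrightarrow> mul R 1 n (one R) p = p \<and> mul R n 1 p (one R) = p"
  by (simp add: discrete_gamma_ring_def)

lemma wpow_car: "discrete_gamma_ring R \<Longrightarrow> w \<in> car R 2 \<Longrightarrow> wpow R w n \<in> car R (2 ^ n)"
proof (induction n)
  case 0 then show ?case using dgr_one[of R] by simp
next
  case (Suc n) then show ?case using dgr_mul_car[of R "wpow R w n" "2^n" w 2] by (simp add: mult.commute)
qed

lemma wpow_add: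
  assumes R: "discrete_gamma_ring R" and w2: "w \<in> car R 2"
  shows "mul R (2^a) (2^b) (wpow R w a) (wpow R w b) = wpow R w (a + b)"
proof (induction b)
  case 0 then show ?case using dgr_unit[OF R wpow_car[OF R w2, of a]] by simp
next
  case (Suc b)
  have "mul R (2^a) (2^Suc b) (wpow R w a) (wpow R w (Suc b))
      = mul R (2^a) (2^b * 2) (wpow R w a) (mul R (2^b) 2 (wpow R w b) w)"
    by (simp add: mult.commute)
  also have "\<dots> = mul R (2^a * 2^b) 2 (mul R (2^a) (2^b) (wpow R w a) (wpow R w b)) w"
    using dgr_assoc[OF R wpow_car[OF R w2, of a] wpow_car[OF R w2, of b] w2] by simp
  also have "\<dots> = wpow R w (Suc (a + b))" using Suc by (simp add: power_add)
  finally show ?case by simp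
qed


section \<open>HN acting on vectors of ones\<close>

lemma HN_simps:
  "car HN n = {xs. length xs = n}"
  "act HN n m f xs = map (\<lambda>j. \<Sum>i\<in>{i\<in>{1..n}. f i = j}. xs ! (i - 1)) [1..<m + 1]"
  "mul HN n m xs ys = concat (map (\<lambda>b. map (\<lambda>a. a * b) xs) ys)"
  "one HN = [1]"
  by (simp_all add: HN_def)

lemma length_act_HN: "length (act HN n m f xs) = m"
  by (simp add: HN_simps)

text \<open>Entry j of a vector indexed by 1..m sits at list position j - 1.\<close>
lemma nth_map_upt_shift: "i \<in> {1..m} \<Longrightarrow> map h [1..<m+1] ! (i - 1) = h i"
  by (subst nth_map) (auto simp: nth_upt)

lemma act_HN_ones:
  "act HN N m f (replicate N 1) = map (\<lambda>j. card {i\<in>{1..N}. f i = j}) [1..<m+1]"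
proof -
  have "(\<Sum>i\<in>{i\<in>{1..N}. f i = j}. replicate N (1::nat) ! (i - 1)) = card {i\<in>{1..N}. f i = j}" for j
    by (subst sum.cong[where B="{i\<in>{1..N}. f i = j}" and h="\<lambda>_. 1"]) auto
  then show ?thesis by (simp add: HN_simps)
qed

lemma act_HN_ones_id: "act HN N N id (replicate N 1) = replicate N 1"
proof -
  have "map (\<lambda>j. card {i\<in>{1..N}. id i = j}) [1..<N+1] = map (\<lambda>j. 1) [1..<N+1]"
  proof (intro map_cong refl)
    fix j assume "j \<in> set [1..<N+1]"
    then have "{i\<in>{1..N}. id i = j} = {j}" by auto
    then show "card {i\<in>{1..N}. id i = j} = 1" by simp
  qed
  then show ?thesis unfolding act_HN_ones by (simp add: map_replicate_const)
qed

lemma card_preimage_sum_fibres: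
  assumes "finite A" "finite J"
  shows "card {i\<in>A. f i \<in> J} = (\<Sum>j\<in>J. card {i\<in>A. f i = j})"
proof -
  have "card {i\<in>A. f i \<in> J} = card (\<Union>j\<in>J. {i\<in>A. f i = j})"
    by (rule arg_cong[where f=card]) auto
  also have "\<dots> = (\<Sum>j\<in>J. card {i\<in>A. f i = j})"
    by (rule card_UN_disjoint) (use assms in auto)
  finally show ?thesis .
qed

text \<open>Functoriality of HN on vectors of ones: fibres of g o f are unions of fibres of f.\<close>
lemma act_HN_ones_comp:
  assumes f: "pmap N m f" and g: "pmap m l g"
  shows "act HN m l g (act HN N m f (replicate N 1)) = act HN N l (g \<circ> f) (replicate N 1)"
proof -
  have "(\<Sum>i\<in>{i\<in>{1..m}. g i = j}. map (\<lambda>j. card {i\<in>{1..N}. f i = j}) [1..<m+1] ! (i - 1))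
        = card {t\<in>{1..N}. g (f t) = j}" if j: "j \<in> {1..l}" for j
  proof -
    have "f t \<in> {1..m}" if "t \<in> {1..N}" "g (f t) = j" for t
      using that f g j unfolding pmap_def by (cases "f t = 0") auto
    then have preimage: "{t\<in>{1..N}. f t \<in> {i\<in>{1..m}. g i = j}} = {t\<in>{1..N}. g (f t) = j}"
      by auto
    have "(\<Sum>i\<in>{i\<in>{1..m}. g i = j}. map (\<lambda>j. card {i\<in>{1..N}. f i = j}) [1..<m+1] ! (i - 1))
       = (\<Sum>i\<in>{i\<in>{1..m}. g i = j}. card {t\<in>{1..N}. f t = i})"
      by (intro sum.cong refl nth_map_upt_shift) auto
    also have "\<dots> = card {t\<in>{1..N}. f t \<in> {i\<in>{1..m}. g i = j}}"
      by (rule card_preimage_sum_fibres[symmetric]) auto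
    finally show ?thesis unfolding preimage .
  qed
  then show ?thesis unfolding act_HN_ones unfolding HN_simps by (intro map_cong refl) auto
qed

text \<open>Two pointed maps [N] -> [k] with the same image of 1_N have fibres of equal size,
  also over the base point, since the fibres together have N elements.\<close>
lemma act_HN_ones_fibres_eq:
  assumes f: "pmap N k f" and f': "pmap N k f'"
    and eq: "act HN N k f (replicate N 1) = act HN N k f' (replicate N 1)"
  shows "card {i\<in>{1..N}. f i = j} = card {i\<in>{1..N}. f' i = j}"
proof -
  have nonbase: "card {i\<in>{1..N}. f i = j} = card {i\<in>{1..N}. f' i = j}" if "j \<in> {1..k}" for j
    using arg_cong[OF eq[unfolded act_HN_ones], of "\<lambda>xs. xs ! (j - 1)"] that
    by (simp only: nth_map_upt_shift)
  have base: "card {i\<in>{1..N}. h i = 0} = N - (\<Sum>j\<in>{1..k}. card {i\<in>{1..N}. h i = j})"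
    if "pmap N k h" for h
  proof -
    have "{i\<in>{1..N}. h i = 0} = {1..N} - {i\<in>{1..N}. h i \<in> {1..k}}"
      using that by (auto simp: pmap_def)
    also have "card ({1..N} - {i\<in>{1..N}. h i \<in> {1..k}}) = N - card {i\<in>{1..N}. h i \<in> {1..k}}"
      by (subst card_Diff_subset) auto
    finally show ?thesis using card_preimage_sum_fibres[of "{1..N}" "{1..k}" h] by simp
  qed
  consider "j = 0" | "j \<in> {1..k}" | "\<not> j \<le> k" by force
  then show ?thesis
  proof cases
    case 1
    then show ?thesis using base[OF f] base[OF f'] nonbase by simp
  next
    case 2
    then show ?thesis by (rule nonbase)
  next
    case 3
    then have "{i\<in>{1..N}. f i = j} = {}" "{i\<in>{1..N}. f' i = j} = {}"
      using f f' by (auto simp: pmap_def)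
    then show ?thesis by (simp only:)
  qed
qed

text \<open>The block map of xs sends the consecutive blocks of sizes xs_1, ..., xs_k of
  {1, 2, ...} to 1, ..., k and everything after them to the base point.\<close>
definition partial_sum :: "nat list \<Rightarrow> nat \<Rightarrow> nat" where
  "partial_sum xs j = (\<Sum>i<j. xs ! i)"

definition block_map :: "nat list \<Rightarrow> nat \<Rightarrow> nat" where
  "block_map xs t =
     (if t = 0 \<or> partial_sum xs (length xs) < t then 0 else LEAST j. t \<le> partial_sum xs j)"

lemma partial_sum_mono: "a \<le> b \<Longrightarrow> partial_sum xs a \<le> partial_sum xs b"
  unfolding partial_sum_def by (intro sum_mono2) auto

lemma pmap_block_map: "pmap N (length xs) (block_map xs)"
  unfolding pmap_def block_map_def by (auto intro: Least_le)

lemma block_map_fibre: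
  assumes j: "j \<in> {1..length xs}" and N: "partial_sum xs (length xs) \<le> N"
  shows "{t\<in>{1..N}. block_map xs t = j} = {partial_sum xs (j - 1)<..partial_sum xs j}"
proof (intro equalityI subsetI)
  fix t assume "t \<in> {t\<in>{1..N}. block_map xs t = j}"
  then have t: "1 \<le> t" "block_map xs t = j" by auto
  have tk: "t \<le> partial_sum xs (length xs)" using t j unfolding block_map_def by (auto split: if_splits)
  then have L: "(LEAST j. t \<le> partial_sum xs j) = j" using t unfolding block_map_def by auto
  have "t \<le> partial_sum xs j" using LeastI[of "\<lambda>j. t \<le> partial_sum xs j"] tk L by metis
  moreover have "\<not> t \<le> partial_sum xs (j - 1)"
    using not_less_Least[of "j - 1" "\<lambda>j. t \<le> partial_sum xs j"] L j by auto
  ultimately show "t \<in> {partial_sum xs (j - 1)<..partial_sum xs j}" by auto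
next
  fix t assume t: "t \<in> {partial_sum xs (j - 1)<..partial_sum xs j}"
  have "(LEAST j. t \<le> partial_sum xs j) = j"
  proof (rule Least_equality)
    show "t \<le> partial_sum xs j" using t by auto
    show "j \<le> y" if y: "t \<le> partial_sum xs y" for y
    proof (rule ccontr)
      assume "\<not> j \<le> y"
      then have "partial_sum xs y \<le> partial_sum xs (j - 1)" by (intro partial_sum_mono) auto
      then show False using t y by auto
    qed
  qed
  moreover have "t \<le> partial_sum xs (length xs)" using t partial_sum_mono[of j "length xs" xs] j by auto
  ultimately show "t \<in> {t\<in>{1..N}. block_map xs t = j}" using t N unfolding block_map_def by auto
qed

lemma act_HN_ones_block_map:
  assumes N: "partial_sum xs (length xs) \<le> N"
  shows "act HN N (length xs) (block_map xs) (replicate N 1) = xs"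
  unfolding act_HN_ones
proof (rule nth_equalityI)
  fix i assume "i < length (map (\<lambda>j. card {t\<in>{1..N}. block_map xs t = j}) [1..<length xs + 1])"
  then have i: "i + 1 \<in> {1..length xs}" by simp
  have "partial_sum xs (i + 1) = partial_sum xs i + xs ! i" by (simp add: partial_sum_def)
  then have "card {t\<in>{1..N}. block_map xs t = i + 1} = xs ! i"
    unfolding block_map_fibre[OF i N] by simp
  then show "map (\<lambda>j. card {t\<in>{1..N}. block_map xs t = j}) [1..<length xs + 1] ! i = xs ! i"
    using i by (simp add: nth_upt)
qed simp

lemma ones_representation:
  fixes xs :: "nat list"
  assumes len: "length xs = k"
  shows "\<exists>n f. pmap (2^n) k f \<and> act HN (2^n) k f (replicate (2^n) 1) = xs"
proof -
  define n where "n = partial_sum xs (length xs)"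
  have "n \<le> 2^n" by (simp add: less_imp_le)
  then have "act HN (2^n) k (block_map xs) (replicate (2^n) 1) = xs"
    using act_HN_ones_block_map[of xs "2^n"] len unfolding n_def by simp
  moreover have "pmap (2^n) k (block_map xs)" using pmap_block_map[of "2^n" xs] len by simp
  ultimately show ?thesis by blast
qed

lemma length_mul_HN: "length (concat (map (\<lambda>b. map (\<lambda>a. a * b) xs) ys)) = length ys * length xs"
  by (induction ys) auto

lemma nth_mul_HN:
  fixes xs ys :: "nat list"
  assumes "i < length xs" "j < length ys"
  shows "concat (map (\<lambda>b. map (\<lambda>a. a * b) xs) ys) ! (j * length xs + i) = xs ! i * ys ! j"
  using assms(2)
proof (induction ys arbitrary: j)
  case Nil then show ?case by simp
next
  case (Cons y ys)
  then show ?case using assms(1) by (cases j) (simp_all add: nth_append add.assoc)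
qed

lemma act_HN_ones_smash:
  assumes f: "pmap N k f" and g: "pmap M l g"
  shows "act HN (N * M) (k * l) (smash N k f g) (replicate (N * M) 1)
       = mul HN k l (act HN N k f (replicate N 1)) (act HN M l g (replicate M 1))"
  unfolding act_HN_ones HN_simps(3)
proof (rule nth_equalityI)
  let ?F = "map (\<lambda>j. card {i \<in> {1..N}. f i = j}) [1..<k + 1]"
  let ?G = "map (\<lambda>j. card {i \<in> {1..M}. g i = j}) [1..<l + 1]"
  show "length (map (\<lambda>j. card {i \<in> {1..N * M}. smash N k f g i = j}) [1..<k * l + 1]) =
        length (concat (map (\<lambda>b. map (\<lambda>a. a * b) ?F) ?G))"
    by (simp only: length_mul_HN) simp
  fix p assume "p < length (map (\<lambda>j. card {i \<in> {1..N * M}. smash N k f g i = j}) [1..<k * l + 1])"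
  then have p: "p < k * l" by simp
  then have k0: "0 < k" by (cases k) auto
  define i where "i = p mod k"
  define j where "j = p div k"
  have i: "i < k" unfolding i_def using k0 by simp
  have j: "j < l" unfolding j_def using p by (simp add: less_mult_imp_div_less mult.commute)
  have pe: "p = j * length ?F + i" unfolding i_def j_def by simp
  have "concat (map (\<lambda>b. map (\<lambda>a. a * b) ?F) ?G) ! p
      = card {a\<in>{1..N}. f a = i + 1} * card {b\<in>{1..M}. g b = j + 1}"
    unfolding pe using i j by (subst nth_mul_HN) (simp_all add: nth_upt)
  also have "\<dots> = card {s\<in>{1..N*M}. smash N k f g s = p + 1}"
    using smash_fibre_card[OF f i, of M g j] pe by simp
  finally show "map (\<lambda>j. card {i \<in> {1..N * M}. smash N k f g i = j}) [1..<k * l + 1] ! p =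
                concat (map (\<lambda>b. map (\<lambda>a. a * b) ?F) ?G) ! p"
    using p by (simp add: nth_upt)
qed


section \<open>Invariance of the powers of a formal sum law\<close>

lemma sum_law_car: "formal_sum_law R w \<Longrightarrow> w \<in> car R 2"
  unfolding formal_sum_law_def by blast

text \<open>Condition (2) of a sum law, extended to the trivial case n = 0.\<close>
lemma wpow_permutation_invariant:
  assumes R: "discrete_gamma_ring R" and w: "formal_sum_law R w"
    and \<sigma>: "\<sigma> permutes {1..2^n}"
  shows "act R (2^n) (2^n) \<sigma> (wpow R w n) = wpow R w n"
proof (cases "n = 0")
  case True
  have wc: "wpow R w n \<in> car R (2^n)" by (rule wpow_car[OF R sum_law_car[OF w]])
  have "\<sigma> i = id i" if "i \<le> 2^n" for i
    using True that permutes_in_image[OF \<sigma>, of 1] permutes_not_in[OF \<sigma>, of 0] by (auto simp: le_Suc_eq)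
  then show ?thesis using dgr_act_cong[OF R _ wc] dgr_act_id[OF R wc] by metis
next
  case False
  then show ?thesis using w \<sigma> unfolding formal_sum_law_def by simp
qed

lemma fibre_preserving_permutation:
  assumes "finite A" "\<And>j. card {i\<in>A. f i = j} = card {i\<in>A. g i = j}"
  shows "\<exists>\<sigma>. \<sigma> permutes A \<and> (\<forall>i\<in>A. g i = f (\<sigma> i))"
proof -
  have "\<forall>j. \<exists>h. bij_betw h {i\<in>A. g i = j} {i\<in>A. f i = j}"
    by (intro allI finite_same_card_bij) (use assms in auto)
  then obtain h where h: "\<And>j. bij_betw (h j) {i\<in>A. g i = j} {i\<in>A. f i = j}" by metis
  define \<sigma> where "\<sigma> = (\<lambda>i. if i \<in> A then h (g i) i else i)"
  have maps: "\<sigma> i \<in> A \<and> f (\<sigma> i) = g i" if "i \<in> A" for i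
    using bij_betwE[OF h[of "g i"]] that by (auto simp: \<sigma>_def)
  have inj: "inj_on \<sigma> A"
  proof (rule inj_onI)
    fix a b assume ab: "a \<in> A" "b \<in> A" "\<sigma> a = \<sigma> b"
    then have "g a = g b" using maps by metis
    moreover have "inj_on (h (g a)) {i\<in>A. g i = g a}" using h bij_betw_def by blast
    ultimately show "a = b" using ab by (auto simp: \<sigma>_def dest: inj_onD)
  qed
  have "\<sigma> ` A = A" using endo_inj_surj[OF assms(1) _ inj] maps by blast
  then have "\<sigma> permutes A"
    by (intro bij_imp_permutes) (use inj in \<open>auto simp: bij_betw_def \<sigma>_def\<close>)
  then show ?thesis using maps by metis
qed

lemma sum_law_same_level:
  assumes R: "discrete_gamma_ring R" and w: "formal_sum_law R w"
    and f: "pmap (2^n) k f" and f': "pmap (2^n) k f'"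
    and eq: "act HN (2^n) k f (replicate (2^n) 1) = act HN (2^n) k f' (replicate (2^n) 1)"
  shows "act R (2^n) k f (wpow R w n) = act R (2^n) k f' (wpow R w n)"
proof -
  have wc: "wpow R w n \<in> car R (2^n)" by (rule wpow_car[OF R sum_law_car[OF w]])
  obtain \<sigma> where \<sigma>: "\<sigma> permutes {1..2^n}" and f'_eq: "\<forall>i\<in>{1..2^n}. f' i = f (\<sigma> i)"
    using fibre_preserving_permutation[of "{1..2^n}" f f'] act_HN_ones_fibres_eq[OF f f' eq] by auto
  have "act R (2^n) k f' (wpow R w n) = act R (2^n) k (f \<circ> \<sigma>) (wpow R w n)"
  proof (rule dgr_act_cong[OF R _ wc])
    fix i :: nat assume "i \<le> 2^n"
    then show "f' i = (f \<circ> \<sigma>) i"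
      using f'_eq permutes_not_in[OF \<sigma>, of 0] f f' by (cases "i = 0") (auto simp: pmap_def)
  qed
  also have "\<dots> = act R (2^n) k f (act R (2^n) (2^n) \<sigma> (wpow R w n))"
    using dgr_act_comp[OF R pmap_permutation[OF \<sigma>] f wc] by simp
  also have "\<dots> = act R (2^n) k f (wpow R w n)"
    using wpow_permutation_invariant[OF R w \<sigma>] by simp
  finally show ?thesis by simp
qed

text \<open>The collapse [2N] = [N] /\ [2] -> [N], the smash of the identity with p_2,
  which is the identity on the first half and sends the second half to the base point.\<close>
definition collapse :: "nat \<Rightarrow> nat \<Rightarrow> nat" where
  "collapse N = smash N N id (proj 2)"

lemma collapse_val:
  assumes "0 < N" "t \<le> 2 * N"
  shows "collapse N t = (if t \<le> N then t else 0)"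
proof (cases "t = 0 \<or> t \<le> N")
  case True
  then show ?thesis by (cases "t = 0") (auto simp: collapse_def smash_def proj_def)
next
  case False
  have "(t - 1) div N = 1" by (rule div_nat_eqI) (use False assms in auto)
  then show ?thesis using False by (simp add: collapse_def smash_def proj_def Let_def)
qed

lemma pmap_collapse: "0 < N \<Longrightarrow> pmap (2 * N) N (collapse N)"
  unfolding pmap_def by (auto simp: collapse_val)

lemma act_HN_ones_collapse:
  assumes "0 < N"
  shows "act HN (2 * N) N (collapse N) (replicate (2 * N) 1) = replicate N 1"
proof -
  have "map (\<lambda>j. card {t\<in>{1..2*N}. collapse N t = j}) [1..<N+1] = map (\<lambda>j. 1) [1..<N+1]"
  proof (intro map_cong refl)
    fix j assume "j \<in> set [1..<N+1]"
    then have "{t\<in>{1..2*N}. collapse N t = j} = {j}"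
      using assms by (auto simp: collapse_val split: if_splits)
    then show "card {t\<in>{1..2*N}. collapse N t = j} = 1" by simp
  qed
  then show ?thesis unfolding act_HN_ones by (simp add: map_replicate_const)
qed

text \<open>The collapse sends w^(n+1) = w^n w to w^n p_2(w) = w^n.\<close>
lemma act_collapse_wpow:
  assumes R: "discrete_gamma_ring R" and w: "formal_sum_law R w"
  shows "act R (2 * 2^n) (2^n) (collapse (2^n)) (wpow R w (Suc n)) = wpow R w n"
proof -
  have wc: "wpow R w n \<in> car R (2^n)" by (rule wpow_car[OF R sum_law_car[OF w]])
  have p1: "pmap (2^n) (2^n) id" and p2: "pmap 2 1 (proj 2)" by (simp_all add: pmap_def proj_def)
  have "act R (2^n * 2) (2^n * 1) (smash (2^n) (2^n) id (proj 2)) (mul R (2^n) 2 (wpow R w n) w)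
      = mul R (2^n) 1 (act R (2^n) (2^n) id (wpow R w n)) (act R 2 1 (proj 2) w)"
    by (rule dgr_smash[OF R p1 p2 wc sum_law_car[OF w]])
  also have "\<dots> = wpow R w n"
    using w dgr_act_id[OF R wc] dgr_unit[OF R wc] unfolding formal_sum_law_def by simp
  finally show ?thesis by (simp add: collapse_def mult.commute)
qed

lemma sum_law_lift:
  assumes R: "discrete_gamma_ring R" and w: "formal_sum_law R w"
    and f: "pmap (2^n) k f" and nm: "n \<le> m"
  shows "\<exists>g. pmap (2^m) k g \<and> act HN (2^m) k g (replicate (2^m) 1) = act HN (2^n) k f (replicate (2^n) 1)
            \<and> act R (2^m) k g (wpow R w m) = act R (2^n) k f (wpow R w n)"
  using nm
proof (induction m rule: dec_induct)
  case base then show ?case using f by blast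
next
  case (step m)
  then obtain g where g: "pmap (2^m) k g"
      "act HN (2^m) k g (replicate (2^m) 1) = act HN (2^n) k f (replicate (2^n) 1)"
      "act R (2^m) k g (wpow R w m) = act R (2^n) k f (wpow R w n)" by blast
  have N: "(0::nat) < 2^m" by simp
  have c: "pmap (2 * 2^m) (2^m) (collapse (2^m))" by (rule pmap_collapse[OF N])
  have wc: "wpow R w (Suc m) \<in> car R (2 * 2^m)"
    using wpow_car[OF R sum_law_car[OF w], of "Suc m"] by simp
  have "pmap (2^Suc m) k (g \<circ> collapse (2^m))" using pmap_comp[OF c g(1)] by simp
  moreover have "act HN (2^Suc m) k (g \<circ> collapse (2^m)) (replicate (2^Suc m) 1)
      = act HN (2^n) k f (replicate (2^n) 1)"
    using act_HN_ones_comp[OF c g(1)] act_HN_ones_collapse[OF N] g(2) by simp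
  moreover have "act R (2^Suc m) k (g \<circ> collapse (2^m)) (wpow R w (Suc m)) = act R (2^n) k f (wpow R w n)"
    using dgr_act_comp[OF R c g(1) wc] act_collapse_wpow[OF R w, of m] g(3) by simp
  ultimately show ?case by blast
qed

lemma sum_law_well_defined:
  assumes R: "discrete_gamma_ring R" and w: "formal_sum_law R w"
    and f: "pmap (2^n) k f" and f': "pmap (2^n') k f'"
    and eq: "act HN (2^n) k f (replicate (2^n) 1) = act HN (2^n') k f' (replicate (2^n') 1)"
  shows "act R (2^n) k f (wpow R w n) = act R (2^n') k f' (wpow R w n')"
proof -
  have ordered: "act R (2^a) k h (wpow R w a) = act R (2^b) k h' (wpow R w b)"
    if h: "pmap (2^a) k h" and h': "pmap (2^b) k h'" and ab: "a \<le> b"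
      and e: "act HN (2^a) k h (replicate (2^a) 1) = act HN (2^b) k h' (replicate (2^b) 1)" for a b h h'
  proof -
    obtain g where g: "pmap (2^b) k g"
        "act HN (2^b) k g (replicate (2^b) 1) = act HN (2^a) k h (replicate (2^a) 1)"
        "act R (2^b) k g (wpow R w b) = act R (2^a) k h (wpow R w a)"
      using sum_law_lift[OF R w h ab] by blast
    show ?thesis using sum_law_same_level[OF R w g(1) h'] g(2,3) e by simp
  qed
  show ?thesis
    using ordered[OF f f' _ eq] ordered[OF f' f _ eq[symmetric]] by (cases "n \<le> n'") auto
qed


section \<open>The multiplicative map induced by a formal sum law\<close>

definition sum_law_map :: "'a gring \<Rightarrow> 'a \<Rightarrow> nat \<Rightarrow> nat list \<Rightarrow> 'a" where
  "sum_law_map R w k xs = (if length xs = k then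
     (let r = (SOME r. pmap (2^(fst r)) k (snd r)
                       \<and> act HN (2^(fst r)) k (snd r) (replicate (2^(fst r)) 1) = xs)
      in act R (2^(fst r)) k (snd r) (wpow R w (fst r))) else undefined)"

text \<open>The defining formula holds for every representative, not only for the chosen one.\<close>
lemma sum_law_map_eq:
  assumes R: "discrete_gamma_ring R" and w: "formal_sum_law R w"
    and f: "pmap (2^n) k f" and xs: "act HN (2^n) k f (replicate (2^n) 1) = xs"
  shows "sum_law_map R w k xs = act R (2^n) k f (wpow R w n)"
proof -
  let ?P = "\<lambda>r. pmap (2^(fst r)) k (snd r) \<and> act HN (2^(fst r)) k (snd r) (replicate (2^(fst r)) 1) = xs"
  have "?P (n, f)" using f xs by simp
  then have "?P (SOME r. ?P r)" by (rule someI)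
  then show ?thesis
    unfolding sum_law_map_def Let_def
    using length_act_HN[of "2^n" k f] sum_law_well_defined[OF R w _ f] xs by auto
qed

text \<open>The induced map sends 1_(2^n) to w^n, as witnessed by the identity representative.\<close>
lemma sum_law_map_ones:
  assumes R: "discrete_gamma_ring R" and w: "formal_sum_law R w"
  shows "sum_law_map R w (2 ^ n) (replicate (2 ^ n) 1) = wpow R w n"
  using sum_law_map_eq[OF R w _ act_HN_ones_id] dgr_act_id[OF R wpow_car[OF R sum_law_car[OF w]]]
  by (simp add: pmap_def)

text \<open>Naturality: a representative of xs composed with g represents g(xs).\<close>
lemma sum_law_map_act:
  assumes R: "discrete_gamma_ring R" and w: "formal_sum_law R w"
    and g: "pmap n m g" and x: "x \<in> car HN n"
  shows "sum_law_map R w m (act HN n m g x) = act R n m g (sum_law_map R w n x)"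
proof -
  obtain a f where f: "pmap (2^a) n f" "act HN (2^a) n f (replicate (2^a) 1) = x"
    using ones_representation[of x n] x by (auto simp: HN_simps)
  have "act HN n m g x = act HN (2^a) m (g \<circ> f) (replicate (2^a) 1)"
    using act_HN_ones_comp[OF f(1) g] f(2) by simp
  then have "sum_law_map R w m (act HN n m g x) = act R (2^a) m (g \<circ> f) (wpow R w a)"
    using sum_law_map_eq[OF R w pmap_comp[OF f(1) g]] by simp
  also have "\<dots> = act R n m g (act R (2^a) n f (wpow R w a))"
    using dgr_act_comp[OF R f(1) g wpow_car[OF R sum_law_car[OF w]]] by simp
  finally show ?thesis using sum_law_map_eq[OF R w f] by simp
qed

text \<open>Multiplicativity, via smash products of representatives and w^a w^b = w^(a+b).\<close>
lemma sum_law_map_mul: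
  assumes R: "discrete_gamma_ring R" and w: "formal_sum_law R w"
    and p: "p \<in> car HN n" and q: "q \<in> car HN m"
  shows "sum_law_map R w (n * m) (mul HN n m p q) = mul R n m (sum_law_map R w n p) (sum_law_map R w m q)"
proof -
  have w2: "w \<in> car R 2" by (rule sum_law_car[OF w])
  obtain a f where f: "pmap (2^a) n f" "act HN (2^a) n f (replicate (2^a) 1) = p"
    using ones_representation[of p n] p by (auto simp: HN_simps)
  obtain b g where g: "pmap (2^b) m g" "act HN (2^b) m g (replicate (2^b) 1) = q"
    using ones_representation[of q m] q by (auto simp: HN_simps)
  have fg: "pmap (2^(a+b)) (n * m) (smash (2^a) n f g)"
    using pmap_smash[OF f(1) g(1)] by (simp add: power_add)
  have "mul HN n m p q = act HN (2^(a+b)) (n * m) (smash (2^a) n f g) (replicate (2^(a+b)) 1)"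
    using act_HN_ones_smash[OF f(1) g(1)] f(2) g(2) by (simp add: power_add)
  then have "sum_law_map R w (n * m) (mul HN n m p q)
      = act R (2^(a+b)) (n * m) (smash (2^a) n f g) (wpow R w (a + b))"
    using sum_law_map_eq[OF R w fg] by simp
  also have "\<dots> = act R (2^a * 2^b) (n * m) (smash (2^a) n f g) (mul R (2^a) (2^b) (wpow R w a) (wpow R w b))"
    using wpow_add[OF R w2, of a b] by (simp add: power_add)
  also have "\<dots> = mul R n m (act R (2^a) n f (wpow R w a)) (act R (2^b) m g (wpow R w b))"
    by (rule dgr_smash[OF R f(1) g(1) wpow_car[OF R w2] wpow_car[OF R w2]])
  finally show ?thesis using sum_law_map_eq[OF R w f] sum_law_map_eq[OF R w g] by simp
qed

text \<open>The unit: eta(k) is represented on level 2^0 = 1, where w^0 = 1.\<close>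
lemma sum_law_map_eta:
  assumes R: "discrete_gamma_ring R" and w: "formal_sum_law R w" and kn: "k \<le> n"
  shows "sum_law_map R w n (eta HN n k) = eta R n k"
proof -
  let ?e = "\<lambda>i. if i = 1 then k else 0"
  have "pmap (2^0) n ?e" using kn by (simp add: pmap_def)
  moreover have "act HN (2^0) n ?e (replicate (2^0) 1) = eta HN n k" by (simp add: eta_def HN_simps)
  ultimately have "sum_law_map R w n (eta HN n k) = act R (2^0) n ?e (wpow R w 0)"
    by (rule sum_law_map_eq[OF R w])
  then show ?thesis by (simp add: eta_def)
qed

lemma sum_law_map_mult_map:
  assumes R: "discrete_gamma_ring R" and w: "formal_sum_law R w"
  shows "mult_map HN R (sum_law_map R w)"
  unfolding mult_map_def
proof (intro conjI allI impI)
  fix n x assume "x \<in> car HN n"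
  then obtain a f where f: "pmap (2^a) n f" "act HN (2^a) n f (replicate (2^a) 1) = x"
    using ones_representation[of x n] by (auto simp: HN_simps)
  show "sum_law_map R w n x \<in> car R n"
    using sum_law_map_eq[OF R w f] dgr_act_car[OF R f(1) wpow_car[OF R sum_law_car[OF w]]] by simp
next
  fix n x assume "x \<notin> car HN n"
  then show "sum_law_map R w n x = undefined" by (simp add: sum_law_map_def HN_simps)
next
  fix n m f x assume "pmap n m f \<and> x \<in> car HN n"
  then show "sum_law_map R w m (act HN n m f x) = act R n m f (sum_law_map R w n x)"
    using sum_law_map_act[OF R w] by blast
next
  fix n k :: nat assume "k \<le> n"
  then show "sum_law_map R w n (eta HN n k) = eta R n k" by (rule sum_law_map_eta[OF R w])
next
  fix n m p q assume "p \<in> car HN n \<and> q \<in> car HN m"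
  then show "sum_law_map R w (n * m) (mul HN n m p q) = mul R n m (sum_law_map R w n p) (sum_law_map R w m q)"
    using sum_law_map_mul[OF R w] by blast
qed

lemma mult_map_on_representative:
  assumes \<psi>: "mult_map HN R \<psi>" and ones: "\<forall>n. \<psi> (2 ^ n) (replicate (2 ^ n) 1) = wpow R w n"
    and f: "pmap (2^n) k f"
  shows "\<psi> k (act HN (2^n) k f (replicate (2^n) 1)) = act R (2^n) k f (wpow R w n)"
proof -
  have "replicate (2^n) (1::nat) \<in> car HN (2^n)" by (simp add: HN_simps)
  then show ?thesis using \<psi> f ones unfolding mult_map_def by metis
qed

lemma mult_map_unique:
  assumes R: "discrete_gamma_ring R" and w: "formal_sum_law R w"
    and \<psi>: "mult_map HN R \<psi>" and ones: "\<forall>n. \<psi> (2 ^ n) (replicate (2 ^ n) 1) = wpow R w n"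
  shows "\<psi> = sum_law_map R w"
proof (intro ext)
  fix k xs
  show "\<psi> k xs = sum_law_map R w k xs"
  proof (cases "xs \<in> car HN k")
    case True
    then obtain a f where f: "pmap (2^a) k f" "act HN (2^a) k f (replicate (2^a) 1) = xs"
      using ones_representation[of xs k] by (auto simp: HN_simps)
    then show ?thesis using mult_map_on_representative[OF \<psi> ones f(1)] sum_law_map_eq[OF R w f] by simp
  next
    case False
    then show ?thesis using \<psi> sum_law_map_mult_map[OF R w] unfolding mult_map_def by simp
  qed
qed

theorem theorem2p2:
  fixes R :: "'a gring" and w :: 'a
  assumes "discrete_gamma_ring R"
    and "formal_sum_law R w"
  shows "(\<exists>!\<phi>. mult_map HN R \<phi> \<and> (\<forall>n. \<phi> (2 ^ n) (replicate (2 ^ n) 1) = wpow R w n))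
       \<and> (\<forall>\<phi>. mult_map HN R \<phi> \<and> (\<forall>n. \<phi> (2 ^ n) (replicate (2 ^ n) 1) = wpow R w n) \<longrightarrow>
            (\<forall>k xs n f. length xs = k \<and> pmap (2 ^ n) k f
                 \<and> act HN (2 ^ n) k f (replicate (2 ^ n) 1) = xs
               \<longrightarrow> \<phi> k xs = act R (2 ^ n) k f (wpow R w n)))"
proof (intro conjI)
  note R = assms(1) and w = assms(2)
  show "\<exists>!\<phi>. mult_map HN R \<phi> \<and> (\<forall>n. \<phi> (2 ^ n) (replicate (2 ^ n) 1) = wpow R w n)"
    using sum_law_map_mult_map[OF R w] sum_law_map_ones[OF R w] mult_map_unique[OF R w] by blast
  show "\<forall>\<phi>. mult_map HN R \<phi> \<and> (\<forall>n. \<phi> (2 ^ n) (replicate (2 ^ n) 1) = wpow R w n) \<longrightarrow>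
          (\<forall>k xs n f. length xs = k \<and> pmap (2 ^ n) k f \<and> act HN (2 ^ n) k f (replicate (2 ^ n) 1) = xs
             \<longrightarrow> \<phi> k xs = act R (2 ^ n) k f (wpow R w n))"
    using mult_map_on_representative by fastforce
qed

end
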